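(* Let $(\mu_z^\varepsilon)$ be a time-analytic local random walk on $\mathcal G$. Then for every pair of distinct vertices $x,y$, \[ {}^{\mathcal O}\mathrm{Ric}(x,y)=\inf\Big\{\nabla_{yx}\mathcal L f\ :\ f:\mathcal K_{xy}\to\mathbb R,\ |f(u)-f(v)|\le\mathrm d(u,v)\ \forall u,v\in\mathcal K_{xy},\ \nabla_{xy}f=1\Big\}, \] where $\mathcal L f(z):=\sum_{w\neq z}\big(f(w)-f(z)\big)\,\frac{d}{d\varepsilon}\big|_{\varepsilon=0}\mu_z^\varepsilon(w)$.
   Context: $\mathcal G$ is a locally finite graph with vertex set $V$, distance $\mathrm d$ on $V$ with $(V,\mathrm d)$ complete. A random walk is a family of probability measures $\mu_z^\varepsilon$ ($z\in V$, $\varepsilon\in[0,1]$) with finite first moments, continuous in $\varepsilon$, $\mu_z^0=\delta_z$. It is local if for each $z$ there is a finite $\mathcal K_z\subset V$ with $\mathrm{supp}(\mu_z^\varepsilon)\subset\mathcal K_z$ for all $\varepsilon$ (so the sum defining $\mathcal Lf(z)$ runs over $w\in\mathcal K_z\setminus\{z\}$); $\mathcal K_{xy}:=\mathcal K_x\cup\mathcal K_y$. It is time-analytic if each $\varepsilon\mapsto\mu_x^\varepsilon(y)$ is analytic and extends analytically to $(-\delta_{xy},1+\delta_{xy})$ for some $\delta_{xy}>0$. ${}^{\mathcal O}\mathrm{Ric}_\varepsilon(x,y):=1-\mathcal W_1(\mu_x^\varepsilon,\mu_y^\varepsilon)/\mathrm d(x,y)$ and ${}^{\mathcal O}\mathrm{Ric}(x,y):=\lim_{\varepsilon\downarrow0}\varepsilon^{-1}{}^{\mathcal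 O}\mathrm{Ric}_\varepsilon(x,y)$. $\nabla_{xy}f:=(f(y)-f(x))/\mathrm d(x,y)$. *)

theory Defs
  imports "HOL-Analysis.Analysis"
begin

definition locally_finite_graph :: "'v set \<Rightarrow> ('v \<Rightarrow> 'v \<Rightarrow> bool) \<Rightarrow> bool" where
  "locally_finite_graph V E \<longleftrightarrow>
     (\<forall>u v. E u v \<longrightarrow> u \<in> V \<and> v \<in> V) \<and> (\<forall>u v. E u v \<longrightarrow> E v u) \<and>
     (\<forall>u\<in>V. finite {v. E u v})"

definition metric_on :: "'v set \<Rightarrow> ('v \<Rightarrow> 'v \<Rightarrow> real) \<Rightarrow> bool" where
  "metric_on V d \<longleftrightarrow>
     (\<forall>u\<in>V. \<forall>v\<in>V. d u v \<ge> 0 \<and> (d u v = 0 \<longleftrightarrow> u = v) \<and> d u v = d v u) \<and>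
     (\<forall>u\<in>V. \<forall>v\<in>V. \<forall>w\<in>V. d u w \<le> d u v + d v w)"

definition complete_metric_on :: "'v set \<Rightarrow> ('v \<Rightarrow> 'v \<Rightarrow> real) \<Rightarrow> bool" where
  "complete_metric_on V d \<longleftrightarrow>
     (\<forall>s. (\<forall>n. s n \<in> V) \<and> (\<forall>e>0. \<exists>N. \<forall>m\<ge>N. \<forall>n\<ge>N. d (s m) (s n) < e)
        \<longrightarrow> (\<exists>l\<in>V. (\<lambda>n. d (s n) l) \<longlonglongrightarrow> 0))"

definition real_analytic_on :: "(real \<Rightarrow> real) \<Rightarrow> real set \<Rightarrow> bool" where
  "real_analytic_on g S \<longleftrightarrow>
     (\<forall>t\<in>S. \<exists>r>0. \<exists>a::nat \<Rightarrow> real. \<forall>s. \<bar>s - t\<bar> < r \<longrightarrow> (\<lambda>n. a n * (s - t) ^ n) sums g s)"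

text \<open>A random walk is given by mass functions mu z eps w = mu_z^eps({w}).
  Only the values for eps in [0,1] matter.\<close>

definition local_random_walk ::
  "'v set \<Rightarrow> ('v \<Rightarrow> 'v \<Rightarrow> real) \<Rightarrow> ('v \<Rightarrow> real \<Rightarrow> 'v \<Rightarrow> real) \<Rightarrow> ('v \<Rightarrow> 'v set) \<Rightarrow> bool" where
  "local_random_walk V d \<mu> K \<longleftrightarrow>
     (\<forall>z\<in>V. \<forall>\<epsilon>\<in>{0..1}.
        (\<forall>w. \<mu> z \<epsilon> w \<ge> 0) \<and> ((\<mu> z \<epsilon>) has_sum 1) UNIV \<and>
        ((\<lambda>w. d z w * \<mu> z \<epsilon> w) summable_on V)) \<and>
     (\<forall>z\<in>V. \<forall>w. continuous_on {0..1} (\<lambda>\<epsilon>. \<mu> z \<epsilon> w)) \<and>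
     (\<forall>z\<in>V. \<forall>w. \<mu> z 0 w = (if w = z then 1 else 0)) \<and>
     (\<forall>z\<in>V. finite (K z) \<and> K z \<subseteq> V \<and>
        (\<forall>\<epsilon>\<in>{0..1}. {w. \<mu> z \<epsilon> w \<noteq> 0} \<subseteq> K z))"

definition time_analytic :: "'v set \<Rightarrow> ('v \<Rightarrow> real \<Rightarrow> 'v \<Rightarrow> real) \<Rightarrow> bool" where
  "time_analytic V \<mu> \<longleftrightarrow>
     (\<forall>x\<in>V. \<forall>y\<in>V. \<exists>\<delta>>0. \<exists>g. real_analytic_on g {-\<delta><..<1+\<delta>} \<and>
        (\<forall>\<epsilon>\<in>{0..1}. g \<epsilon> = \<mu> x \<epsilon> y))"

definition rate :: "('v \<Rightarrow> real \<Rightarrow> 'v \<Rightarrow> real) \<Rightarrow> 'v \<Rightarrow> 'v \<Rightarrow> real" where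
  "rate \<mu> z w = (THE D. ((\<lambda>\<epsilon>. \<mu> z \<epsilon> w) has_real_derivative D) (at 0 within {0..1}))"

definition gen :: "('v \<Rightarrow> real \<Rightarrow> 'v \<Rightarrow> real) \<Rightarrow> ('v \<Rightarrow> 'v set) \<Rightarrow> ('v \<Rightarrow> real) \<Rightarrow> 'v \<Rightarrow> real" where
  "gen \<mu> K f z = (\<Sum>w\<in>K z - {z}. (f w - f z) * rate \<mu> z w)"

definition grad :: "('v \<Rightarrow> 'v \<Rightarrow> real) \<Rightarrow> 'v \<Rightarrow> 'v \<Rightarrow> ('v \<Rightarrow> real) \<Rightarrow> real" where
  "grad d x y f = (f y - f x) / d x y"

definition coupling :: "('v \<Rightarrow> real) \<Rightarrow> ('v \<Rightarrow> real) \<Rightarrow> ('v \<times> 'v \<Rightarrow> real) \<Rightarrow> bool" where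
  "coupling p q \<pi> \<longleftrightarrow> (\<forall>u v. \<pi> (u, v) \<ge> 0) \<and>
     (\<forall>u. ((\<lambda>v. \<pi> (u, v)) has_sum p u) UNIV) \<and>
     (\<forall>v. ((\<lambda>u. \<pi> (u, v)) has_sum q v) UNIV)"

definition W1 :: "('v \<Rightarrow> 'v \<Rightarrow> real) \<Rightarrow> ('v \<Rightarrow> real) \<Rightarrow> ('v \<Rightarrow> real) \<Rightarrow> real" where
  "W1 d p q = Inf ((\<lambda>\<pi>. infsum (\<lambda>(u, v). d u v * \<pi> (u, v)) UNIV) ` {\<pi>. coupling p q \<pi>})"

definition ollivier_ric_eps :: "('v \<Rightarrow> 'v \<Rightarrow> real) \<Rightarrow> ('v \<Rightarrow> real \<Rightarrow> 'v \<Rightarrow> real) \<Rightarrow> real \<Rightarrow> 'v \<Rightarrow> 'v \<Rightarrow> real" where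
  "ollivier_ric_eps d \<mu> \<epsilon> x y = 1 - W1 d (\<mu> x \<epsilon>) (\<mu> y \<epsilon>) / d x y"

end

theory Submission
  imports Defs
begin

text \<open>Since the walk is local, everything happens on the finite set \<open>K x \<union> K y\<close>. On a finite set, Kantorovich--Rubinstein duality (derived
  here from Farkas' lemma) gives \<open>W\<^sub>1(\<mu>\<^sub>x\<^sup>\<epsilon>, \<mu>\<^sub>y\<^sup>\<epsilon>) = sup\<^sub>h \<Sum> h (\<mu>\<^sub>x\<^sup>\<epsilon> - \<mu>\<^sub>y\<^sup>\<epsilon>)\<close> over 1-Lipschitz \<open>h\<close>.
  Because \<open>\<mu>\<^sub>z\<^sup>\<epsilon> = \<delta>\<^sub>z + \<epsilon> \<partial>\<^sub>\<epsilon>\<mu>\<^sub>z\<^sup>0 + o(\<epsilon>)\<close> (time-analyticity only provides the derivative),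
  the pairing equals \<open>h x - h y + \<epsilon> (L h x - L h y) + o(\<epsilon>)\<close> uniformly in \<open>h\<close>. Testing with \<open>-f\<close> for
  an admissible \<open>f\<close> bounds the curvature from above. Conversely, as soon as
  \<open>\<mu>\<^sub>x\<^sup>\<epsilon> x + \<mu>\<^sub>y\<^sup>\<epsilon> y \<ge> 1\<close>, replacing \<open>h\<close> by its truncation \<open>max (h - \<tau>) (h x - d x \<cdot>)\<close> with
  \<open>\<tau> = d x y - (h x - h y)\<close> does not decrease the pairing and yields an admissible function up to
  sign, which gives the matching lower bound.\<close>

section \<open>Farkas' lemma\<close>

text \<open>One step of Fourier--Motzkin elimination of a variable whose coefficients are \<open>a\<close>: a row \<open>i\<close>
  with \<open>a i = 0\<close> survives as row \<open>2 * i\<close>, and each pair of rows \<open>i\<close>, \<open>j\<close> with \<open>a i > 0 > a j\<close> is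
  combined into row \<open>i / a i - j / a j\<close>, indexed by the odd number \<open>2 * \<langle>i, j\<rangle> + 1\<close>.
  \<open>fm_pullback\<close> transports multipliers of the eliminated system back to the original one.\<close>

definition fm_rows :: "nat set \<Rightarrow> (nat \<Rightarrow> real) \<Rightarrow> nat set" where
  "fm_rows I a = (\<lambda>i. 2 * i) ` {i \<in> I. a i = 0} \<union>
     (\<lambda>(i, j). Suc (2 * prod_encode (i, j))) ` ({i \<in> I. 0 < a i} \<times> {j \<in> I. a j < 0})"

definition fm_combine :: "(nat \<Rightarrow> real) \<Rightarrow> (nat \<Rightarrow> real) \<Rightarrow> nat \<Rightarrow> real" where
  "fm_combine a b k = (if even k then b (k div 2)
     else case prod_decode (k div 2) of (i, j) \<Rightarrow> b i / a i - b j / a j)"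

definition fm_pullback :: "nat set \<Rightarrow> (nat \<Rightarrow> real) \<Rightarrow> (nat \<Rightarrow> real) \<Rightarrow> nat \<Rightarrow> real" where
  "fm_pullback I a l i =
     (if a i = 0 then l (2 * i)
      else if 0 < a i then (\<Sum>j \<in> {j \<in> I. a j < 0}. l (Suc (2 * prod_encode (i, j)))) / a i
      else (\<Sum>j \<in> {j \<in> I. 0 < a j}. l (Suc (2 * prod_encode (j, i)))) / - a i)"

lemma fm_combine_even [simp]: "fm_combine a b (2 * i) = b i"
  by (simp add: fm_combine_def)

lemma fm_combine_odd [simp]: "fm_combine a b (Suc (2 * prod_encode (i, j))) = b i / a i - b j / a j"
  by (simp add: fm_combine_def)

lemma finite_fm_rows: "finite I \<Longrightarrow> finite (fm_rows I a)"
  by (simp add: fm_rows_def)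

lemma fm_rows_memI:
  "i \<in> I \<Longrightarrow> a i = 0 \<Longrightarrow> 2 * i \<in> fm_rows I a"
  "i \<in> I \<Longrightarrow> 0 < a i \<Longrightarrow> j \<in> I \<Longrightarrow> a j < 0 \<Longrightarrow> Suc (2 * prod_encode (i, j)) \<in> fm_rows I a"
  by (auto simp: fm_rows_def)

lemma fm_combine_eliminates: "k \<in> fm_rows I a \<Longrightarrow> fm_combine a a k = 0"
  by (auto simp: fm_rows_def)

lemma fm_pullback_nonneg:
  assumes "\<forall>k\<in>fm_rows I a. 0 \<le> l k" and "i \<in> I"
  shows "0 \<le> fm_pullback I a l i"
proof -
  have "0 \<le> l (2 * i)" if "a i = 0"
    using assms that by (auto simp: fm_rows_def)
  moreover have "0 \<le> (\<Sum>j \<in> {j \<in> I. a j < 0}. l (Suc (2 * prod_encode (i, j))))" if "0 < a i"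
    using assms that by (intro sum_nonneg) (auto simp: fm_rows_def)
  moreover have "0 \<le> (\<Sum>j \<in> {j \<in> I. 0 < a j}. l (Suc (2 * prod_encode (j, i))))" if "a i < 0"
    using assms that by (intro sum_nonneg) (auto simp: fm_rows_def)
  ultimately show ?thesis
    by (auto simp: fm_pullback_def not_less divide_nonneg_neg)
qed

lemma sum_fm_pullback:
  assumes "finite I"
  shows "(\<Sum>i\<in>I. fm_pullback I a l i * b i) = (\<Sum>k\<in>fm_rows I a. l k * fm_combine a b k)"
proof -
  define Z P N where "Z = {i \<in> I. a i = 0}" and "P = {i \<in> I. 0 < a i}" and "N = {i \<in> I. a i < 0}"
  define e where "e = (\<lambda>(i, j). Suc (2 * prod_encode (i, j)))"
  have fin: "finite Z" "finite P" "finite N"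
    using assms by (auto simp: Z_def P_def N_def)
  have inj_e: "inj e"
    by (auto simp: inj_def e_def dest: inj_prod_encode[THEN injD])
  have pairs: "(\<Sum>(i, j)\<in>P \<times> N. l (e (i, j)) * (b i / a i - b j / a j))
      = (\<Sum>i\<in>P. fm_pullback I a l i * b i) + (\<Sum>j\<in>N. fm_pullback I a l j * b j)"
  proof -
    have "(\<Sum>i\<in>P. fm_pullback I a l i * b i) = (\<Sum>i\<in>P. \<Sum>j\<in>N. l (e (i, j)) * (b i / a i))"
      by (rule sum.cong) (auto simp: fm_pullback_def P_def N_def e_def sum_distrib_right sum_divide_distrib)
    moreover have "(\<Sum>j\<in>N. fm_pullback I a l j * b j) = - (\<Sum>j\<in>N. \<Sum>i\<in>P. l (e (i, j)) * (b j / a j))"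
      unfolding sum_negf[symmetric]
      by (rule sum.cong) (auto simp: fm_pullback_def P_def N_def e_def sum_distrib_right sum_divide_distrib sum_negf)
    ultimately show ?thesis
      by (simp add: sum.cartesian_product[symmetric] right_diff_distrib sum_subtractf sum.swap[of _ N])
  qed
  have disj: "Z \<inter> (P \<union> N) = {}" "P \<inter> N = {}"
    by (auto simp: Z_def P_def N_def)
  have "(\<Sum>i\<in>I. fm_pullback I a l i * b i) = (\<Sum>i\<in>Z \<union> (P \<union> N). fm_pullback I a l i * b i)"
    by (rule sum.cong) (auto simp: Z_def P_def N_def)
  also have "\<dots> = (\<Sum>i\<in>Z. fm_pullback I a l i * b i)
      + ((\<Sum>i\<in>P. fm_pullback I a l i * b i) + (\<Sum>j\<in>N. fm_pullback I a l j * b j))"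
    using fin disj by (simp add: sum.union_disjoint)
  also have "(\<Sum>i\<in>Z. fm_pullback I a l i * b i) = (\<Sum>i\<in>Z. l (2 * i) * b i)"
    by (rule sum.cong) (auto simp: Z_def fm_pullback_def)
  also note pairs[symmetric]
  also have "(\<Sum>i\<in>Z. l (2 * i) * b i) + (\<Sum>(i, j)\<in>P \<times> N. l (e (i, j)) * (b i / a i - b j / a j))
      = (\<Sum>k\<in>(\<lambda>i. 2 * i) ` Z. l k * fm_combine a b k) + (\<Sum>k\<in>e ` (P \<times> N). l k * fm_combine a b k)"
    by (simp add: sum.reindex inj_on_def inj_on_subset[OF inj_e] e_def case_prod_unfold fm_combine_def)
  also have "\<dots> = (\<Sum>k\<in>fm_rows I a. l k * fm_combine a b k)"
    unfolding fm_rows_def Z_def[symmetric] P_def[symmetric] N_def[symmetric] e_def[symmetric]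
    using fin by (intro sum.union_disjoint[symmetric]) (auto simp: e_def, presburger)
  finally show ?thesis .
qed

lemma exists_between_finite:
  fixes L :: "'a \<Rightarrow> real"
  assumes "finite P" and "finite N" and "\<And>i j. i \<in> P \<Longrightarrow> j \<in> N \<Longrightarrow> L j \<le> L i"
  shows "\<exists>t. (\<forall>i\<in>P. t \<le> L i) \<and> (\<forall>j\<in>N. L j \<le> t)"
proof (cases "N = {}")
  case True
  then show ?thesis
    using assms(1) by (intro exI[of _ "Min (L ` P)"]) simp
next
  case False
  then have "Max (L ` N) \<in> L ` N"
    using assms(2) by simp
  then show ?thesis
    using assms by (intro exI[of _ "Max (L ` N)"]) auto
qed

lemma fm_solution_extend:
  fixes A :: "nat \<Rightarrow> 'x \<Rightarrow> real" and c :: "nat \<Rightarrow> real" and s :: 'x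
  defines "a \<equiv> \<lambda>i. A i s"
  assumes "finite I" and "finite X" and "s \<notin> X"
    and z: "\<forall>k\<in>fm_rows I a. (\<Sum>v\<in>X. fm_combine a (\<lambda>i. A i v) k * z v) \<le> fm_combine a c k"
  shows "\<exists>z'. \<forall>i\<in>I. (\<Sum>v\<in>insert s X. A i v * z' v) \<le> c i"
proof -
  define Az where "Az i = (\<Sum>v\<in>X. A i v * z v)" for i
  define r where "r i = (c i - Az i) / a i" for i
  have zero_rows: "Az i \<le> c i" if "i \<in> I" "a i = 0" for i
    using z[rule_format, OF fm_rows_memI(1)[of i I a, OF that]] by (simp add: Az_def)
  have "r j \<le> r i" if "i \<in> I" "0 < a i" "j \<in> I" "a j < 0" for i j
  proof -
    have "(\<Sum>v\<in>X. (A i v / a i - A j v / a j) * z v) \<le> c i / a i - c j / a j"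
      using z[rule_format, OF fm_rows_memI(2)[of i I a j, OF that]] by simp
    then show ?thesis
      by (simp add: r_def Az_def diff_divide_distrib left_diff_distrib sum_subtractf sum_divide_distrib)
  qed
  then obtain t where t: "\<forall>i\<in>{i \<in> I. 0 < a i}. t \<le> r i" "\<forall>j\<in>{j \<in> I. a j < 0}. r j \<le> t"
    using exists_between_finite[of "{i \<in> I. 0 < a i}" "{j \<in> I. a j < 0}" r] assms(2) by auto
  have "(\<Sum>v\<in>insert s X. A i v * (z(s := t)) v) \<le> c i" if "i \<in> I" for i
  proof -
    have "(\<Sum>v\<in>X. A i v * (z(s := t)) v) = Az i"
      unfolding Az_def using assms(4) by (intro sum.cong) auto
    then have "(\<Sum>v\<in>insert s X. A i v * (z(s := t)) v) = a i * t + Az i"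
      using assms(3,4) by (simp add: a_def)
    moreover have "a i * t \<le> c i - Az i"
    proof (cases "a i" "0 :: real" rule: linorder_cases)
      case less
      then show ?thesis using t(2) that by (auto simp: r_def neg_divide_le_eq mult.commute)
    next
      case equal
      then show ?thesis using zero_rows that by simp
    next
      case greater
      then show ?thesis using t(1) that by (auto simp: r_def pos_le_divide_eq mult.commute)
    qed
    ultimately show ?thesis
      by simp
  qed
  then show ?thesis
    by blast
qed

lemma farkas_nat:
  fixes A :: "nat \<Rightarrow> 'x \<Rightarrow> real" and c :: "nat \<Rightarrow> real"
  assumes "finite X" and "finite I" and "\<nexists>z. \<forall>i\<in>I. (\<Sum>v\<in>X. A i v * z v) \<le> c i"
  shows "\<exists>l. (\<forall>i\<in>I. 0 \<le> l i) \<and> (\<forall>v\<in>X. (\<Sum>i\<in>I. l i * A i v) = 0) \<and> (\<Sum>i\<in>I. l i * c i) < 0"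
  using assms
proof (induction X arbitrary: I A c rule: finite_induct)
  case empty
  then obtain i where i: "i \<in> I" "c i < 0"
    by (auto simp: not_le)
  define l :: "nat \<Rightarrow> real" where "l j = (if j = i then 1 else 0)" for j
  have "(\<Sum>j\<in>I. l j * c j) = (\<Sum>j\<in>I. if j = i then c j else 0)"
    by (rule sum.cong) (auto simp: l_def)
  also have "\<dots> = c i"
    using i empty.prems(1) by simp
  finally show ?case
    using i by (intro exI[of _ l]) (simp add: l_def)
next
  case (insert s X)
  define a where "a i = A i s" for i
  have "\<nexists>z. \<forall>k\<in>fm_rows I a. (\<Sum>v\<in>X. fm_combine a (\<lambda>i. A i v) k * z v) \<le> fm_combine a c k"
  proof
    assume "\<exists>z. \<forall>k\<in>fm_rows I a. (\<Sum>v\<in>X. fm_combine a (\<lambda>i. A i v) k * z v) \<le> fm_combine a c k"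
    then obtain z where "\<forall>k\<in>fm_rows I a. (\<Sum>v\<in>X. fm_combine a (\<lambda>i. A i v) k * z v) \<le> fm_combine a c k"
      by blast
    from fm_solution_extend[OF insert.prems(1) insert.hyps(1,2) this[unfolded a_def]]
    show False
      using insert.prems(2) by blast
  qed
  then obtain l where l: "\<forall>k\<in>fm_rows I a. 0 \<le> l k"
      "\<forall>v\<in>X. (\<Sum>k\<in>fm_rows I a. l k * fm_combine a (\<lambda>i. A i v) k) = 0"
      "(\<Sum>k\<in>fm_rows I a. l k * fm_combine a c k) < 0"
    using insert.IH[of "fm_rows I a" "\<lambda>k v. fm_combine a (\<lambda>i. A i v) k" "fm_combine a c"]
      finite_fm_rows[OF insert.prems(1)] by blast
  have "(\<Sum>i\<in>I. fm_pullback I a l i * A i s) = 0"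
    using sum_fm_pullback[OF insert.prems(1), of a l a] fm_combine_eliminates
    by (simp add: a_def[symmetric])
  moreover have "(\<Sum>i\<in>I. fm_pullback I a l i * A i v) = 0" if "v \<in> X" for v
    using sum_fm_pullback[OF insert.prems(1), of a l] l(2) that by simp
  moreover have "(\<Sum>i\<in>I. fm_pullback I a l i * c i) < 0"
    using sum_fm_pullback[OF insert.prems(1), of a l] l(3) by simp
  ultimately show ?case
    using fm_pullback_nonneg[OF l(1)] by (intro exI[of _ "fm_pullback I a l"]) simp
qed

lemma farkas:
  fixes A :: "'i \<Rightarrow> 'x \<Rightarrow> real" and c :: "'i \<Rightarrow> real"
  assumes "finite X" and "finite I" and "\<nexists>z. \<forall>i\<in>I. (\<Sum>v\<in>X. A i v * z v) \<le> c i"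
  shows "\<exists>l. (\<forall>i\<in>I. 0 \<le> l i) \<and> (\<forall>v\<in>X. (\<Sum>i\<in>I. l i * A i v) = 0) \<and> (\<Sum>i\<in>I. l i * c i) < 0"
proof -
  obtain h where h: "bij_betw h {0..<card I} I"
    using ex_bij_betw_nat_finite[OF assms(2)] by blast
  define g where "g = inv_into {0..<card I} h"
  have g: "g i \<in> {0..<card I}" "h (g i) = i" if "i \<in> I" for i
    using h that unfolding g_def bij_betw_def by (metis inv_into_into, metis f_inv_into_f)
  have "\<nexists>z. \<forall>n\<in>{0..<card I}. (\<Sum>v\<in>X. A (h n) v * z v) \<le> c (h n)"
    using assms(3) g by metis
  then obtain l where l: "\<forall>n\<in>{0..<card I}. 0 \<le> l n"
      "\<forall>v\<in>X. (\<Sum>n\<in>{0..<card I}. l n * A (h n) v) = 0" "(\<Sum>n\<in>{0..<card I}. l n * c (h n)) < 0"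
    using farkas_nat[of X "{0..<card I}" "\<lambda>n. A (h n)" "\<lambda>n. c (h n)"] assms(1) by auto
  have reindex: "(\<Sum>i\<in>I. l (g i) * b i) = (\<Sum>n\<in>{0..<card I}. l n * b (h n))" for b :: "'i \<Rightarrow> real"
  proof -
    have "g (h n) = n" if "n \<in> {0..<card I}" for n
      using h that by (simp add: g_def bij_betw_def)
    then show ?thesis
      by (simp add: sum.reindex_bij_betw[OF h, symmetric])
  qed
  show ?thesis
    using l g by (intro exI[of _ "l \<circ> g"]) (simp add: reindex)
qed

section \<open>Kantorovich--Rubinstein duality on a finite set\<close>

definition lipschitz1_on :: "'a set \<Rightarrow> ('a \<Rightarrow> 'a \<Rightarrow> real) \<Rightarrow> ('a \<Rightarrow> real) \<Rightarrow> bool" where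
  "lipschitz1_on S d f \<longleftrightarrow> (\<forall>u\<in>S. \<forall>v\<in>S. \<bar>f u - f v\<bar> \<le> d u v)"

lemma metric_on_subset: "metric_on V d \<Longrightarrow> S \<subseteq> V \<Longrightarrow> metric_on S d"
  unfolding metric_on_def by (meson subsetD)

lemma metric_on_self: "metric_on S d \<Longrightarrow> u \<in> S \<Longrightarrow> d u u = 0"
  by (simp add: metric_on_def)

lemma metric_on_sym: "metric_on S d \<Longrightarrow> u \<in> S \<Longrightarrow> v \<in> S \<Longrightarrow> d u v = d v u"
  by (simp add: metric_on_def)

lemma metric_on_nonneg: "metric_on S d \<Longrightarrow> u \<in> S \<Longrightarrow> v \<in> S \<Longrightarrow> 0 \<le> d u v"
  by (simp add: metric_on_def)

lemma metric_on_triangle: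
  "metric_on S d \<Longrightarrow> u \<in> S \<Longrightarrow> v \<in> S \<Longrightarrow> w \<in> S \<Longrightarrow> d u w \<le> d u v + d v w"
  by (simp add: metric_on_def)

lemma lipschitz1_on_dist:
  assumes "metric_on S d" and "x \<in> S"
  shows "lipschitz1_on S d (d x)"
  unfolding lipschitz1_on_def
proof (intro ballI)
  fix u v
  assume "u \<in> S" and "v \<in> S"
  then have "d x u \<le> d x v + d v u" and "d x v \<le> d x u + d u v" and "d v u = d u v"
    using metric_on_triangle[OF assms(1)] metric_on_sym[OF assms(1)] assms(2) by blast+
  then show "\<bar>d x u - d x v\<bar> \<le> d u v"
    by linarith
qed

definition c_transform :: "'a set \<Rightarrow> ('a \<Rightarrow> 'a \<Rightarrow> real) \<Rightarrow> ('a \<Rightarrow> real) \<Rightarrow> 'a \<Rightarrow> real" where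
  "c_transform S d g u = Min ((\<lambda>v. d u v - g v) ` S)"

lemma c_transform_le: "finite S \<Longrightarrow> v \<in> S \<Longrightarrow> c_transform S d g u \<le> d u v - g v"
  by (simp add: c_transform_def)

lemma c_transform_attained:
  assumes "finite S" and "S \<noteq> {}"
  obtains v where "v \<in> S" and "c_transform S d g u = d u v - g v"
proof -
  have "c_transform S d g u \<in> (\<lambda>v. d u v - g v) ` S"
    unfolding c_transform_def using assms by (intro Min_in) auto
  then show ?thesis
    using that by blast
qed

lemma lipschitz1_on_c_transform:
  assumes "finite S" and "S \<noteq> {}" and "metric_on S d"
  shows "lipschitz1_on S d (c_transform S d g)"
proof -
  have step: "c_transform S d g u \<le> d u v + c_transform S d g v" if "u \<in> S" "v \<in> S" for u v
  proof -
    obtain w where w: "w \<in> S" "c_transform S d g v = d v w - g w"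
      using c_transform_attained[OF assms(1,2)] by blast
    have "c_transform S d g u \<le> d u w - g w"
      using c_transform_le[OF assms(1) w(1)] .
    also have "\<dots> \<le> d u v + d v w - g w"
      using metric_on_triangle[OF assms(3) that w(1)] by simp
    finally show ?thesis
      using w(2) by simp
  qed
  show ?thesis
    unfolding lipschitz1_on_def
  proof (intro ballI)
    fix u v
    assume "u \<in> S" and "v \<in> S"
    moreover have "d v u = d u v"
      using metric_on_sym[OF assms(3) \<open>v \<in> S\<close> \<open>u \<in> S\<close>] .
    ultimately show "\<bar>c_transform S d g u - c_transform S d g v\<bar> \<le> d u v"
      using step[of u v] step[of v u] by linarith
  qed
qed

text \<open>The transport problem as a system of inequalities in the unknowns \<open>z (u, v)\<close>: nonnegativity,
  row sums at most \<open>p\<close>, column sums at least \<open>q\<close> and cost at most \<open>B\<close>. Since \<open>p\<close> and \<open>q\<close> both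
  have mass 1, a solution has exactly the marginals \<open>p\<close> and \<open>q\<close>.\<close>

datatype 'a transport_constraint = Nonneg 'a 'a | Supply 'a | Demand 'a | Budget

fun transport_coeff :: "('a \<Rightarrow> 'a \<Rightarrow> real) \<Rightarrow> 'a transport_constraint \<Rightarrow> 'a \<times> 'a \<Rightarrow> real" where
  "transport_coeff d (Nonneg u v) w = (if w = (u, v) then -1 else 0)"
| "transport_coeff d (Supply u) w = (if fst w = u then 1 else 0)"
| "transport_coeff d (Demand v) w = (if snd w = v then -1 else 0)"
| "transport_coeff d Budget w = d (fst w) (snd w)"

fun transport_bound :: "real \<Rightarrow> ('a \<Rightarrow> real) \<Rightarrow> ('a \<Rightarrow> real) \<Rightarrow> 'a transport_constraint \<Rightarrow> real" where
  "transport_bound B p q (Nonneg u v) = 0"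
| "transport_bound B p q (Supply u) = p u"
| "transport_bound B p q (Demand v) = - q v"
| "transport_bound B p q Budget = B"

definition transport_constraints :: "'a set \<Rightarrow> 'a transport_constraint set" where
  "transport_constraints S = case_prod Nonneg ` (S \<times> S) \<union> Supply ` S \<union> Demand ` S \<union> {Budget}"

lemma finite_transport_constraints: "finite S \<Longrightarrow> finite (transport_constraints S)"
  by (simp add: transport_constraints_def)

lemma transport_constraints_memI:
  "u \<in> S \<Longrightarrow> v \<in> S \<Longrightarrow> Nonneg u v \<in> transport_constraints S"
  "u \<in> S \<Longrightarrow> Supply u \<in> transport_constraints S"
  "v \<in> S \<Longrightarrow> Demand v \<in> transport_constraints S"
  "Budget \<in> transport_constraints S"
  unfolding transport_constraints_def by (auto intro: image_eqI[of _ _ "(u, v)"])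

lemma sum_transport_constraints:
  assumes "finite S"
  shows "(\<Sum>i\<in>transport_constraints S. g i) =
    (\<Sum>(u, v)\<in>S \<times> S. g (Nonneg u v)) + (\<Sum>u\<in>S. g (Supply u)) + (\<Sum>v\<in>S. g (Demand v)) + g Budget"
proof -
  let ?N = "case_prod Nonneg ` (S \<times> S)"
  have "(\<Sum>i\<in>transport_constraints S. g i) = sum g (?N \<union> Supply ` S \<union> Demand ` S) + g Budget"
    using assms by (simp add: transport_constraints_def image_iff add.commute)
  also have "sum g (?N \<union> Supply ` S \<union> Demand ` S) = sum g (?N \<union> Supply ` S) + sum g (Demand ` S)"
    using assms by (intro sum.union_disjoint) auto
  also have "sum g (?N \<union> Supply ` S) = sum g ?N + sum g (Supply ` S)"
    using assms by (intro sum.union_disjoint) auto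
  also have "sum g ?N = (\<Sum>(u, v)\<in>S \<times> S. g (Nonneg u v))"
    by (rule sum.reindex_cong[of "case_prod Nonneg"]) (auto simp: inj_on_def)
  also have "sum g (Supply ` S) = (\<Sum>u\<in>S. g (Supply u))"
    by (rule sum.reindex_cong[of Supply]) (auto simp: inj_on_def)
  also have "sum g (Demand ` S) = (\<Sum>v\<in>S. g (Demand v))"
    by (rule sum.reindex_cong[of Demand]) (auto simp: inj_on_def)
  finally show ?thesis .
qed

lemma sum_transport_coeff:
  assumes "finite S" and "u \<in> S" and "v \<in> S"
  shows "(\<Sum>i\<in>transport_constraints S. l i * transport_coeff d i (u, v))
    = - l (Nonneg u v) + l (Supply u) - l (Demand v) + l Budget * d u v"
proof -
  have "(\<Sum>(u', v')\<in>S \<times> S. l (Nonneg u' v') * transport_coeff d (Nonneg u' v') (u, v))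
      = (\<Sum>w\<in>S \<times> S. if w = (u, v) then - l (Nonneg u v) else 0)"
    by (rule sum.cong) (auto split: if_splits)
  moreover have "(\<Sum>u'\<in>S. l (Supply u') * transport_coeff d (Supply u') (u, v))
      = (\<Sum>u'\<in>S. if u' = u then l (Supply u) else 0)"
    by (rule sum.cong) auto
  moreover have "(\<Sum>v'\<in>S. l (Demand v') * transport_coeff d (Demand v') (u, v))
      = (\<Sum>v'\<in>S. if v' = v then - l (Demand v) else 0)"
    by (rule sum.cong) auto
  ultimately show ?thesis
    using assms by (simp add: sum_transport_constraints)
qed

lemma sum_transport_bound:
  assumes "finite S"
  shows "(\<Sum>i\<in>transport_constraints S. l i * transport_bound B p q i)
    = (\<Sum>u\<in>S. l (Supply u) * p u) - (\<Sum>v\<in>S. l (Demand v) * q v) + l Budget * B"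
  using assms by (simp add: sum_transport_constraints sum_negf)

lemma transport_coeff_pairing:
  assumes "finite S" and "u \<in> S" and "v \<in> S"
  shows "(\<Sum>w\<in>S \<times> S. transport_coeff d (Nonneg u v) w * z w) = - z (u, v)"
    and "(\<Sum>w\<in>S \<times> S. transport_coeff d (Supply u) w * z w) = (\<Sum>v'\<in>S. z (u, v'))"
    and "(\<Sum>w\<in>S \<times> S. transport_coeff d (Demand v) w * z w) = - (\<Sum>u'\<in>S. z (u', v))"
proof -
  have "(\<Sum>w\<in>S \<times> S. transport_coeff d (Nonneg u v) w * z w) = (\<Sum>w\<in>S \<times> S. if w = (u, v) then - z w else 0)"
    by (rule sum.cong) auto
  then show "(\<Sum>w\<in>S \<times> S. transport_coeff d (Nonneg u v) w * z w) = - z (u, v)"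
    using assms by simp
  have "(\<Sum>w\<in>S \<times> S. transport_coeff d (Supply u) w * z w) = (\<Sum>(u', v')\<in>S \<times> S. if u' = u then z (u', v') else 0)"
    by (rule sum.cong) auto
  also have "\<dots> = (\<Sum>u'\<in>S. \<Sum>v'\<in>S. if u' = u then z (u', v') else 0)"
    by (rule sum.cartesian_product[symmetric])
  also have "\<dots> = (\<Sum>u'\<in>S. if u' = u then \<Sum>v'\<in>S. z (u', v') else 0)"
    by (rule sum.cong) auto
  finally show "(\<Sum>w\<in>S \<times> S. transport_coeff d (Supply u) w * z w) = (\<Sum>v'\<in>S. z (u, v'))"
    using assms by simp
  have "(\<Sum>w\<in>S \<times> S. transport_coeff d (Demand v) w * z w) = (\<Sum>(u', v')\<in>S \<times> S. if v' = v then - z (u', v') else 0)"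
    by (rule sum.cong) auto
  also have "\<dots> = (\<Sum>u'\<in>S. \<Sum>v'\<in>S. if v' = v then - z (u', v') else 0)"
    by (rule sum.cartesian_product[symmetric])
  also have "\<dots> = (\<Sum>v'\<in>S. \<Sum>u'\<in>S. if v' = v then - z (u', v') else 0)"
    by (rule sum.swap)
  also have "\<dots> = (\<Sum>v'\<in>S. if v' = v then - (\<Sum>u'\<in>S. z (u', v')) else 0)"
    by (rule sum.cong) (auto simp: sum_negf)
  finally show "(\<Sum>w\<in>S \<times> S. transport_coeff d (Demand v) w * z w) = - (\<Sum>u'\<in>S. z (u', v))"
    using assms by simp
qed

lemma weighted_sum_le_of_all_le:
  fixes F G p q :: "'a \<Rightarrow> real"
  assumes p: "\<forall>u\<in>S. 0 \<le> p u" "sum p S = 1" and q: "\<forall>v\<in>S. 0 \<le> q v" "sum q S = 1"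
    and le: "\<And>u v. u \<in> S \<Longrightarrow> v \<in> S \<Longrightarrow> G v \<le> F u"
  shows "(\<Sum>v\<in>S. G v * q v) \<le> (\<Sum>u\<in>S. F u * p u)"
proof -
  have "(\<Sum>v\<in>S. G v * q v) = (\<Sum>v\<in>S. \<Sum>u\<in>S. p u * (G v * q v))"
    by (simp add: sum_distrib_right[symmetric] p(2))
  also have "\<dots> = (\<Sum>u\<in>S. \<Sum>v\<in>S. p u * (G v * q v))"
    by (rule sum.swap)
  also have "\<dots> \<le> (\<Sum>u\<in>S. \<Sum>v\<in>S. p u * (F u * q v))"
    using p(1) q(1) le by (intro sum_mono mult_left_mono mult_right_mono) auto
  also have "\<dots> = (\<Sum>u\<in>S. F u * p u)"
    by (simp add: sum_distrib_left[symmetric] q(2) mult.commute)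
  finally show ?thesis .
qed

text \<open>For \<open>c > 0\<close> the witnessing test function is the
  c-transform of \<open>G / c\<close>.\<close>

lemma kantorovich_dual_bound:
  assumes fin: "finite S" and ne: "S \<noteq> {}" and metric: "metric_on S d"
    and p: "\<forall>u\<in>S. 0 \<le> p u" "sum p S = 1" and q: "\<forall>v\<in>S. 0 \<le> q v" "sum q S = 1"
    and bound: "\<And>h. lipschitz1_on S d h \<Longrightarrow> (\<Sum>u\<in>S. h u * (p u - q u)) \<le> B"
    and "0 \<le> c" and FG: "\<And>u v. u \<in> S \<Longrightarrow> v \<in> S \<Longrightarrow> G v - F u \<le> c * d u v"
  shows "(\<Sum>v\<in>S. G v * q v) - (\<Sum>u\<in>S. F u * p u) \<le> c * B"
proof (cases "c = 0")
  case True
  then show ?thesis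
    using weighted_sum_le_of_all_le[OF p q, of G F] FG by simp
next
  case False
  with \<open>0 \<le> c\<close> have "0 < c"
    by simp
  define h where "h = c_transform S d (\<lambda>v. G v / c)"
  have h_lower: "- F u / c \<le> h u" if "u \<in> S" for u
  proof -
    obtain v where v: "v \<in> S" "h u = d u v - G v / c"
      using c_transform_attained[OF fin ne] unfolding h_def by metis
    have "G v / c - F u / c \<le> d u v"
      using FG[OF that v(1)] \<open>0 < c\<close> by (simp add: diff_divide_distrib[symmetric] pos_divide_le_eq mult.commute)
    then show ?thesis
      using v(2) by simp
  qed
  have h_upper: "h v \<le> - G v / c" if "v \<in> S" for v
    using c_transform_le[OF fin that, of d "\<lambda>v. G v / c" v] metric_on_self[OF metric that]
    by (simp add: h_def)
  have "((\<Sum>v\<in>S. G v * q v) - (\<Sum>u\<in>S. F u * p u)) / c = (\<Sum>u\<in>S. (- F u / c) * p u) - (\<Sum>v\<in>S. (- G v / c) * q v)"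
    by (simp add: diff_divide_distrib sum_divide_distrib sum_negf)
  also have "\<dots> \<le> (\<Sum>u\<in>S. h u * p u) - (\<Sum>v\<in>S. h v * q v)"
    using h_lower h_upper p(1) q(1) by (intro diff_mono sum_mono mult_right_mono) auto
  also have "\<dots> = (\<Sum>u\<in>S. h u * (p u - q u))"
    by (simp add: right_diff_distrib sum_subtractf)
  also have "\<dots> \<le> B"
    using bound lipschitz1_on_c_transform[OF fin ne metric] by (simp add: h_def)
  finally show ?thesis
    using \<open>0 < c\<close> by (simp add: pos_divide_le_eq mult.commute)
qed

lemma transport_plan_of_feasible:
  assumes fin: "finite S" and p: "sum p S = 1" and q: "sum q S = 1"
    and z: "\<forall>i\<in>transport_constraints S. (\<Sum>w\<in>S \<times> S. transport_coeff d i w * z w) \<le> transport_bound B p q i"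
  shows "(\<forall>w\<in>S \<times> S. 0 \<le> z w) \<and> (\<forall>u\<in>S. (\<Sum>v\<in>S. z (u, v)) = p u)
    \<and> (\<forall>v\<in>S. (\<Sum>u\<in>S. z (u, v)) = q v) \<and> (\<Sum>w\<in>S \<times> S. d (fst w) (snd w) * z w) \<le> B"
proof -
  have "0 \<le> z (u, v)" if "u \<in> S" "v \<in> S" for u v
    using z[rule_format, OF transport_constraints_memI(1)[OF that]] transport_coeff_pairing(1)[OF fin that]
    by simp
  then have nonneg: "\<forall>w\<in>S \<times> S. 0 \<le> z w"
    by auto
  have rows: "(\<Sum>v\<in>S. z (u, v)) \<le> p u" if "u \<in> S" for u
    using z[rule_format, OF transport_constraints_memI(2)[OF that]] transport_coeff_pairing(2)[OF fin that that]
    by simp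
  have cols: "q v \<le> (\<Sum>u\<in>S. z (u, v))" if "v \<in> S" for v
    using z[rule_format, OF transport_constraints_memI(3)[OF that]] transport_coeff_pairing(3)[OF fin that that]
    by simp
  have cost: "(\<Sum>w\<in>S \<times> S. d (fst w) (snd w) * z w) \<le> B"
    using z[rule_format, OF transport_constraints_memI(4)] by simp
  have "(\<Sum>u\<in>S. \<Sum>v\<in>S. z (u, v)) \<le> 1"
    using sum_mono[of S "\<lambda>u. \<Sum>v\<in>S. z (u, v)" p] rows p by simp
  moreover have "1 \<le> (\<Sum>v\<in>S. \<Sum>u\<in>S. z (u, v))"
    using sum_mono[of S q "\<lambda>v. \<Sum>u\<in>S. z (u, v)"] cols q by simp
  moreover have "(\<Sum>u\<in>S. \<Sum>v\<in>S. z (u, v)) = (\<Sum>v\<in>S. \<Sum>u\<in>S. z (u, v))"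
    by (rule sum.swap)
  ultimately have "sum (\<lambda>u. \<Sum>v\<in>S. z (u, v)) S = sum p S" and "sum q S = sum (\<lambda>v. \<Sum>u\<in>S. z (u, v)) S"
    using p q by linarith+
  then have "\<forall>u\<in>S. (\<Sum>v\<in>S. z (u, v)) = p u" and "\<forall>v\<in>S. (\<Sum>u\<in>S. z (u, v)) = q v"
    using sum_mono_inv[of "\<lambda>u. \<Sum>v\<in>S. z (u, v)" S p] sum_mono_inv[of q S "\<lambda>v. \<Sum>u\<in>S. z (u, v)"]
      rows cols fin by (metis, metis)
  then show ?thesis
    using nonneg cost by blast
qed

lemma transport_plan_exists:
  assumes fin: "finite S" and ne: "S \<noteq> {}" and metric: "metric_on S d"
    and p: "\<forall>u\<in>S. 0 \<le> p u" "sum p S = 1" and q: "\<forall>v\<in>S. 0 \<le> q v" "sum q S = 1"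
    and bound: "\<And>h. lipschitz1_on S d h \<Longrightarrow> (\<Sum>u\<in>S. h u * (p u - q u)) \<le> B"
  shows "\<exists>\<pi>. (\<forall>w\<in>S \<times> S. 0 \<le> \<pi> w) \<and> (\<forall>u\<in>S. (\<Sum>v\<in>S. \<pi> (u, v)) = p u)
    \<and> (\<forall>v\<in>S. (\<Sum>u\<in>S. \<pi> (u, v)) = q v) \<and> (\<Sum>w\<in>S \<times> S. d (fst w) (snd w) * \<pi> w) \<le> B"
proof (cases "\<exists>z. \<forall>i\<in>transport_constraints S. (\<Sum>w\<in>S \<times> S. transport_coeff d i w * z w) \<le> transport_bound B p q i")
  case True
  then obtain z
    where "\<forall>i\<in>transport_constraints S. (\<Sum>w\<in>S \<times> S. transport_coeff d i w * z w) \<le> transport_bound B p q i"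
    by blast
  from transport_plan_of_feasible[OF fin p(2) q(2) this] show ?thesis
    by blast
next
  case False
  then obtain l where l: "\<forall>i\<in>transport_constraints S. 0 \<le> l i"
      "\<forall>w\<in>S \<times> S. (\<Sum>i\<in>transport_constraints S. l i * transport_coeff d i w) = 0"
      "(\<Sum>i\<in>transport_constraints S. l i * transport_bound B p q i) < 0"
    using farkas[OF finite_cartesian_product[OF fin fin] finite_transport_constraints[OF fin]] by blast
  have "(\<Sum>v\<in>S. l (Demand v) * q v) - (\<Sum>u\<in>S. l (Supply u) * p u) \<le> l Budget * B"
  proof (rule kantorovich_dual_bound[OF fin ne metric p q bound])
    show "0 \<le> l Budget"
      using l(1) transport_constraints_memI(4) by blast
    show "l (Demand v) - l (Supply u) \<le> l Budget * d u v" if "u \<in> S" "v \<in> S" for u v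
    proof -
      have "0 \<le> l (Nonneg u v)"
        using l(1) transport_constraints_memI(1)[OF that] by blast
      moreover have "(\<Sum>i\<in>transport_constraints S. l i * transport_coeff d i (u, v)) = 0"
        using l(2) that by blast
      ultimately show ?thesis
        using sum_transport_coeff[OF fin that, of l d] by linarith
    qed
  qed
  then show ?thesis
    using l(3) sum_transport_bound[OF fin, of l B p q] by simp
qed

definition supported_pmf :: "'a set \<Rightarrow> ('a \<Rightarrow> real) \<Rightarrow> bool" where
  "supported_pmf S p \<longleftrightarrow> (\<forall>w. 0 \<le> p w) \<and> (\<forall>w. w \<notin> S \<longrightarrow> p w = 0) \<and> sum p S = 1"

lemma has_sum_UNIV_iff_finite_support:
  fixes f :: "'a \<Rightarrow> real"
  assumes "finite S" and "\<And>w. w \<notin> S \<Longrightarrow> f w = 0"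
  shows "(f has_sum s) UNIV \<longleftrightarrow> s = sum f S"
proof -
  have "(f has_sum s) UNIV \<longleftrightarrow> (f has_sum s) S"
    using assms(2) by (intro has_sum_cong_neutral) auto
  then show ?thesis
    using has_sum_finite_iff[OF assms(1)] by simp
qed

lemma has_sum_term_le:
  fixes f :: "'a \<Rightarrow> real"
  assumes "(f has_sum s) UNIV" and "\<And>w. 0 \<le> f w"
  shows "f w \<le> s"
  using has_sum_mono_neutral[OF has_sum_finite[of "{w}" f] assms(1)] assms(2) by simp

lemma coupling_nonneg: "coupling p q \<pi> \<Longrightarrow> 0 \<le> \<pi> w"
  by (cases w) (simp add: coupling_def)

lemma coupling_vanishes_outside:
  assumes "supported_pmf S p" and "supported_pmf S q" and "coupling p q \<pi>" and "w \<notin> S \<times> S"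
  shows "\<pi> w = 0"
proof (cases w)
  case (Pair u v)
  have "\<pi> (u, v) \<le> p u"
    using has_sum_term_le[of "\<lambda>v'. \<pi> (u, v')" "p u" v] assms(3) coupling_nonneg[OF assms(3)]
    by (simp add: coupling_def)
  moreover have "\<pi> (u, v) \<le> q v"
    using has_sum_term_le[of "\<lambda>u'. \<pi> (u', v)" "q v" u] assms(3) coupling_nonneg[OF assms(3)]
    by (simp add: coupling_def)
  moreover have "p u = 0 \<or> q v = 0"
    using assms(1,2,4) Pair by (auto simp: supported_pmf_def)
  ultimately show ?thesis
    using coupling_nonneg[OF assms(3), of w] Pair by auto
qed

lemma coupling_marginals:
  assumes "finite S" and "supported_pmf S p" and "supported_pmf S q" and "coupling p q \<pi>"
  shows "u \<in> S \<Longrightarrow> (\<Sum>v\<in>S. \<pi> (u, v)) = p u"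
    and "v \<in> S \<Longrightarrow> (\<Sum>u\<in>S. \<pi> (u, v)) = q v"
proof -
  have "\<pi> (u, v) = 0" if "v \<notin> S" for v
    using coupling_vanishes_outside[OF assms(2-4), of "(u, v)"] that by simp
  then have "((\<lambda>v. \<pi> (u, v)) has_sum p u) UNIV \<longleftrightarrow> p u = (\<Sum>v\<in>S. \<pi> (u, v))"
    by (rule has_sum_UNIV_iff_finite_support[OF assms(1)])
  moreover have "((\<lambda>v. \<pi> (u, v)) has_sum p u) UNIV"
    using assms(4) by (simp add: coupling_def)
  ultimately show "(\<Sum>v\<in>S. \<pi> (u, v)) = p u"
    by simp
  have "\<pi> (u, v) = 0" if "u \<notin> S" for u
    using coupling_vanishes_outside[OF assms(2-4), of "(u, v)"] that by simp
  then have "((\<lambda>u. \<pi> (u, v)) has_sum q v) UNIV \<longleftrightarrow> q v = (\<Sum>u\<in>S. \<pi> (u, v))"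
    by (rule has_sum_UNIV_iff_finite_support[OF assms(1)])
  moreover have "((\<lambda>u. \<pi> (u, v)) has_sum q v) UNIV"
    using assms(4) by (simp add: coupling_def)
  ultimately show "(\<Sum>u\<in>S. \<pi> (u, v)) = q v"
    by simp
qed

lemma coupling_cost:
  assumes "finite S" and "supported_pmf S p" and "supported_pmf S q" and "coupling p q \<pi>"
  shows "infsum (\<lambda>(u, v). d u v * \<pi> (u, v)) UNIV = (\<Sum>w\<in>S \<times> S. d (fst w) (snd w) * \<pi> w)"
proof -
  have "infsum (\<lambda>(u, v). d u v * \<pi> (u, v)) UNIV = infsum (\<lambda>(u, v). d u v * \<pi> (u, v)) (S \<times> S)"
  proof (rule infsum_cong_neutral)
    fix w
    assume "w \<in> UNIV - S \<times> S"
    then have "\<pi> w = 0"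
      by (intro coupling_vanishes_outside[OF assms(2-4)]) simp
    then show "(case w of (u, v) \<Rightarrow> d u v * \<pi> (u, v)) = 0"
      by (simp add: case_prod_beta)
  qed simp_all
  also have "\<dots> = (\<Sum>w\<in>S \<times> S. d (fst w) (snd w) * \<pi> w)"
    using assms(1) by (simp add: case_prod_beta)
  finally show ?thesis .
qed

lemma lipschitz_pairing_le_coupling_cost:
  assumes "finite S" and "supported_pmf S p" and "supported_pmf S q" and "coupling p q \<pi>"
    and "lipschitz1_on S d h"
  shows "(\<Sum>u\<in>S. h u * (p u - q u)) \<le> infsum (\<lambda>(u, v). d u v * \<pi> (u, v)) UNIV"
proof -
  note marginals = coupling_marginals[OF assms(1-4)]
  have "(\<Sum>u\<in>S. h u * p u) = (\<Sum>u\<in>S. \<Sum>v\<in>S. h u * \<pi> (u, v))"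
    by (rule sum.cong) (simp_all add: marginals(1)[symmetric] sum_distrib_left)
  moreover have "(\<Sum>v\<in>S. h v * q v) = (\<Sum>v\<in>S. \<Sum>u\<in>S. h v * \<pi> (u, v))"
    by (rule sum.cong) (simp_all add: marginals(2)[symmetric] sum_distrib_left)
  ultimately have "(\<Sum>u\<in>S. h u * (p u - q u)) = (\<Sum>u\<in>S. \<Sum>v\<in>S. (h u - h v) * \<pi> (u, v))"
    by (simp add: right_diff_distrib left_diff_distrib sum_subtractf sum.swap[of "\<lambda>v u. h v * \<pi> (u, v)"])
  also have "\<dots> \<le> (\<Sum>u\<in>S. \<Sum>v\<in>S. d u v * \<pi> (u, v))"
    using assms(5) coupling_nonneg[OF assms(4)]
    by (intro sum_mono mult_right_mono) (auto simp: lipschitz1_on_def abs_le_iff)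
  also have "\<dots> = infsum (\<lambda>(u, v). d u v * \<pi> (u, v)) UNIV"
    by (simp add: coupling_cost[OF assms(1-4)] sum.cartesian_product case_prod_beta)
  finally show ?thesis .
qed

lemma product_coupling:
  assumes "finite S" and "supported_pmf S p" and "supported_pmf S q"
  shows "coupling p q (\<lambda>(u, v). p u * q v)"
proof -
  have hp: "(p has_sum 1) UNIV" and hq: "(q has_sum 1) UNIV"
    using assms by (simp_all add: supported_pmf_def has_sum_UNIV_iff_finite_support)
  have "((\<lambda>v. p u * q v) has_sum p u) UNIV" for u
    using has_sum_cmult_right[OF hq, of "p u"] by simp
  moreover have "((\<lambda>u. p u * q v) has_sum q v) UNIV" for v
    using has_sum_cmult_right[OF hp, of "q v"] by (simp add: mult.commute)
  ultimately show ?thesis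
    using assms(2,3) by (simp add: coupling_def supported_pmf_def)
qed

lemma lipschitz_pairing_le_W1:
  assumes "finite S" and "supported_pmf S p" and "supported_pmf S q" and "lipschitz1_on S d h"
  shows "(\<Sum>u\<in>S. h u * (p u - q u)) \<le> W1 d p q"
  unfolding W1_def
proof (rule cInf_greatest)
  show "(\<lambda>\<pi>. infsum (\<lambda>(u, v). d u v * \<pi> (u, v)) UNIV) ` {\<pi>. coupling p q \<pi>} \<noteq> {}"
    using product_coupling[OF assms(1-3)] by blast
qed (use lipschitz_pairing_le_coupling_cost[OF assms(1-3) _ assms(4)] in blast)

lemma W1_le_of_lipschitz_pairing_bound:
  assumes fin: "finite S" and ne: "S \<noteq> {}" and metric: "metric_on S d"
    and p: "supported_pmf S p" and q: "supported_pmf S q"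
    and bound: "\<And>h. lipschitz1_on S d h \<Longrightarrow> (\<Sum>u\<in>S. h u * (p u - q u)) \<le> B"
  shows "W1 d p q \<le> B"
proof -
  obtain \<pi>0 where \<pi>0: "\<forall>w\<in>S \<times> S. 0 \<le> \<pi>0 w" "\<forall>u\<in>S. (\<Sum>v\<in>S. \<pi>0 (u, v)) = p u"
      "\<forall>v\<in>S. (\<Sum>u\<in>S. \<pi>0 (u, v)) = q v" "(\<Sum>w\<in>S \<times> S. d (fst w) (snd w) * \<pi>0 w) \<le> B"
    using transport_plan_exists[OF fin ne metric _ _ _ _ bound] p q by (auto simp: supported_pmf_def)
  define \<pi> where "\<pi> w = (if w \<in> S \<times> S then \<pi>0 w else 0)" for w
  have "((\<lambda>v. \<pi> (u, v)) has_sum p u) UNIV" for u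
  proof (subst has_sum_UNIV_iff_finite_support[OF fin])
    show "\<pi> (u, v) = 0" if "v \<notin> S" for v
      using that by (simp add: \<pi>_def)
    show "p u = (\<Sum>v\<in>S. \<pi> (u, v))"
      using \<pi>0(2) p by (cases "u \<in> S") (auto simp: \<pi>_def supported_pmf_def)
  qed
  moreover have "((\<lambda>u. \<pi> (u, v)) has_sum q v) UNIV" for v
  proof (subst has_sum_UNIV_iff_finite_support[OF fin])
    show "\<pi> (u, v) = 0" if "u \<notin> S" for u
      using that by (simp add: \<pi>_def)
    show "q v = (\<Sum>u\<in>S. \<pi> (u, v))"
      using \<pi>0(3) q by (cases "v \<in> S") (auto simp: \<pi>_def supported_pmf_def)
  qed
  ultimately have coupling: "coupling p q \<pi>"
    using \<pi>0(1) by (auto simp: coupling_def \<pi>_def)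
  have "W1 d p q \<le> infsum (\<lambda>(u, v). d u v * \<pi> (u, v)) UNIV"
    unfolding W1_def
  proof (rule cInf_lower)
    show "bdd_below ((\<lambda>\<pi>. infsum (\<lambda>(u, v). d u v * \<pi> (u, v)) UNIV) ` {\<pi>. coupling p q \<pi>})"
      using lipschitz_pairing_le_coupling_cost[OF fin p q, of _ d "\<lambda>_. 0"] metric_on_nonneg[OF metric]
      by (intro bdd_belowI[of _ 0]) (auto simp: lipschitz1_on_def)
  qed (use coupling in blast)
  also have "\<dots> = (\<Sum>w\<in>S \<times> S. d (fst w) (snd w) * \<pi>0 w)"
    using coupling_cost[OF fin p q coupling] by (simp add: \<pi>_def)
  finally show ?thesis
    using \<pi>0(4) by simp
qed

section \<open>Local random walks\<close>

lemma real_analytic_on_has_real_derivative: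
  assumes "real_analytic_on g S" and "t \<in> S"
  obtains D where "(g has_real_derivative D) (at t)"
proof -
  obtain r a where "0 < r" and series: "\<And>s. \<bar>s - t\<bar> < r \<Longrightarrow> (\<lambda>n. a n * (s - t) ^ n) sums g s"
    using assms unfolding real_analytic_on_def by blast
  define F where "F u = (\<Sum>n. a n * u ^ n)" for u :: real
  have "summable (\<lambda>n. a n * (r / 2) ^ n)"
    using series[of "t + r / 2"] \<open>0 < r\<close> by (simp add: sums_summable)
  then have "(F has_real_derivative (\<Sum>n. diffs a n * 0 ^ n)) (at 0)"
    unfolding F_def by (rule termdiffs_strong) (use \<open>0 < r\<close> in simp)
  then have "(F has_real_derivative (\<Sum>n. diffs a n * 0 ^ n)) (at (t + - t))"
    by simp
  then have deriv: "((\<lambda>s. F (s - t)) has_real_derivative (\<Sum>n. diffs a n * 0 ^ n)) (at t)"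
    by (simp only: DERIV_shift diff_conv_add_uminus)
  have "F (s - t) = g s" if "s \<in> ball t r" for s
    using series[of s] that by (simp add: F_def dist_real_def abs_minus_commute sums_iff)
  then have "(g has_real_derivative (\<Sum>n. diffs a n * 0 ^ n)) (at t)"
    using has_field_derivative_transform_within_open[OF deriv, of "ball t r" g] \<open>0 < r\<close> by simp
  then show ?thesis
    by (rule that)
qed

lemma rate_eqI:
  assumes "((\<lambda>\<epsilon>. \<mu> z \<epsilon> w) has_real_derivative D) (at 0 within {0..1})"
  shows "rate \<mu> z w = D"
proof -
  have "at (0::real) within {0..1} \<noteq> bot"
    by (simp add: at_within_Icc_at_right)
  then show ?thesis
    unfolding rate_def using assms has_field_derivative_unique by blast
qed

lemma time_analytic_has_rate:
  assumes "time_analytic V \<mu>" and "z \<in> V" and "w \<in> V"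
  shows "((\<lambda>\<epsilon>. \<mu> z \<epsilon> w) has_real_derivative rate \<mu> z w) (at 0 within {0..1})"
proof -
  obtain \<delta> g where "0 < \<delta>" and analytic: "real_analytic_on g {-\<delta><..<1+\<delta>}"
    and g: "\<forall>\<epsilon>\<in>{0..1}. g \<epsilon> = \<mu> z \<epsilon> w"
    using assms unfolding time_analytic_def by blast
  have "0 \<in> {-\<delta><..<1+\<delta>}"
    using \<open>0 < \<delta>\<close> by simp
  then obtain D where "(g has_real_derivative D) (at 0)"
    by (rule real_analytic_on_has_real_derivative[OF analytic])
  then have "(g has_real_derivative D) (at 0 within {0..1})"
    by (rule has_field_derivative_at_within)
  then have "((\<lambda>\<epsilon>. \<mu> z \<epsilon> w) has_real_derivative D) (at 0 within {0..1})"
    by (rule has_field_derivative_transform_within[where d = 1]) (use g in auto)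
  then show ?thesis
    using rate_eqI[of \<mu> z w D] by simp
qed

lemma local_random_walkD:
  assumes "local_random_walk V d \<mu> K" and "z \<in> V"
  shows "\<epsilon> \<in> {0..1} \<Longrightarrow> 0 \<le> \<mu> z \<epsilon> w"
    and "\<epsilon> \<in> {0..1} \<Longrightarrow> w \<notin> K z \<Longrightarrow> \<mu> z \<epsilon> w = 0"
    and "\<epsilon> \<in> {0..1} \<Longrightarrow> (\<mu> z \<epsilon> has_sum 1) UNIV"
    and "\<mu> z 0 w = (if w = z then 1 else 0)"
    and "continuous_on {0..1} (\<lambda>\<epsilon>. \<mu> z \<epsilon> w)"
    and "finite (K z)"
    and "K z \<subseteq> V"
  using assms unfolding local_random_walk_def by blast+

lemma local_random_walk_center:
  assumes "local_random_walk V d \<mu> K" and "z \<in> V"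
  shows "z \<in> K z"
proof -
  have "\<mu> z 0 z = 1"
    using local_random_walkD(4)[OF assms, of z] by simp
  moreover have "z \<notin> K z \<Longrightarrow> \<mu> z 0 z = 0"
    by (rule local_random_walkD(2)[OF assms]) simp_all
  ultimately show ?thesis
    by linarith
qed

lemma local_random_walk_supported_pmf:
  assumes "local_random_walk V d \<mu> K" and "z \<in> V" and "\<epsilon> \<in> {0..1}" and "finite S" and "K z \<subseteq> S"
  shows "supported_pmf S (\<mu> z \<epsilon>)"
proof -
  have outside: "\<mu> z \<epsilon> w = 0" if "w \<notin> S" for w
    using assms(5) local_random_walkD(2)[OF assms(1-3)] that by blast
  then have "sum (\<mu> z \<epsilon>) S = 1"
    using local_random_walkD(3)[OF assms(1-3)] has_sum_UNIV_iff_finite_support[OF assms(4) outside] by simp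
  then show ?thesis
    using outside local_random_walkD(1)[OF assms(1-3)] by (simp add: supported_pmf_def)
qed

lemma rate_outside:
  assumes "local_random_walk V d \<mu> K" and "z \<in> V" and "w \<notin> K z"
  shows "rate \<mu> z w = 0"
proof (rule rate_eqI)
  show "((\<lambda>\<epsilon>. \<mu> z \<epsilon> w) has_real_derivative 0) (at 0 within {0..1})"
    by (rule has_field_derivative_transform_within[OF DERIV_const, where d = 1])
      (use local_random_walkD(2)[OF assms(1,2) _ assms(3)] in auto)
qed

lemma sum_rate_eq_0:
  assumes "local_random_walk V d \<mu> K" and "time_analytic V \<mu>" and "z \<in> V"
    and "finite S" and "K z \<subseteq> S" and "S \<subseteq> V"
  shows "(\<Sum>w\<in>S. rate \<mu> z w) = 0"
proof -
  have "((\<lambda>\<epsilon>. \<Sum>w\<in>S. \<mu> z \<epsilon> w) has_real_derivative (\<Sum>w\<in>S. rate \<mu> z w)) (at 0 within {0..1})"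
    by (rule DERIV_sum, rule time_analytic_has_rate[OF assms(2,3)]) (use assms(6) in auto)
  moreover have "((\<lambda>\<epsilon>. \<Sum>w\<in>S. \<mu> z \<epsilon> w) has_real_derivative 0) (at 0 within {0..1})"
    by (rule has_field_derivative_transform_within[OF DERIV_const[of 1], where d = 1])
      (use local_random_walk_supported_pmf[OF assms(1,3) _ assms(4,5)] in \<open>auto simp: supported_pmf_def\<close>)
  moreover have "at (0::real) within {0..1} \<noteq> bot"
    by (simp add: at_within_Icc_at_right)
  ultimately show ?thesis
    using has_field_derivative_unique by blast
qed

lemma gen_eq_sum:
  assumes "local_random_walk V d \<mu> K" and "time_analytic V \<mu>" and "z \<in> V"
    and "finite S" and "K z \<subseteq> S" and "S \<subseteq> V"
  shows "gen \<mu> K f z = (\<Sum>w\<in>S. f w * rate \<mu> z w)"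
proof -
  have "(\<Sum>w\<in>S. f w * rate \<mu> z w) = (\<Sum>w\<in>S. (f w - f z) * rate \<mu> z w) + f z * (\<Sum>w\<in>S. rate \<mu> z w)"
    by (simp add: left_diff_distrib sum_subtractf sum_distrib_left)
  also have "\<dots> = (\<Sum>w\<in>S. (f w - f z) * rate \<mu> z w)"
    using sum_rate_eq_0[OF assms] by simp
  also have "\<dots> = (\<Sum>w\<in>K z - {z}. (f w - f z) * rate \<mu> z w)"
    using assms(4,5) rate_outside[OF assms(1,3)] by (intro sum.mono_neutral_right) auto
  finally show ?thesis
    by (simp add: gen_def)
qed

lemma gen_uminus: "gen \<mu> K (\<lambda>z. - f z) z = - gen \<mu> K f z"
  unfolding gen_def sum_negf[symmetric] by (rule sum.cong) (simp_all add: algebra_simps)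

section \<open>The curvature limit\<close>

lemma lipschitz1_on_max:
  assumes "lipschitz1_on S d f" and "lipschitz1_on S d g"
  shows "lipschitz1_on S d (\<lambda>z. max (f z) (g z))"
  using assms unfolding lipschitz1_on_def abs_le_iff by (smt (verit, best))

text \<open>Truncating \<open>h\<close> from below by the cone \<open>h x - d x \<cdot>\<close> produces a test function whose gradient
  from \<open>x\<close> to \<open>y\<close> is exactly \<open>-1\<close>, while \<open>h - g\<close> vanishes at \<open>x\<close> and is maximal at \<open>y\<close>.\<close>

lemma lipschitz1_on_cone_truncation:
  assumes "metric_on S d" and "x \<in> S" and "y \<in> S" and "lipschitz1_on S d h"
  obtains g where "lipschitz1_on S d g" and "g x = h x" and "g y = h x - d x y"
    and "\<And>z. z \<in> S \<Longrightarrow> 0 \<le> h z - g z \<and> h z - g z \<le> d x y - (h x - h y)"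
proof -
  define \<tau> where "\<tau> = d x y - (h x - h y)"
  have lip: "\<bar>h u - h v\<bar> \<le> d u v" if "u \<in> S" "v \<in> S" for u v
    using assms(4) that by (simp add: lipschitz1_on_def)
  have "0 \<le> \<tau>"
    using lip[OF assms(2,3)] by (simp add: \<tau>_def)
  have "lipschitz1_on S d (\<lambda>z. h z - \<tau>)"
    using assms(4) by (simp add: lipschitz1_on_def)
  moreover have "lipschitz1_on S d (\<lambda>z. h x - d x z)"
    using lipschitz1_on_dist[OF assms(1,2)] by (simp add: lipschitz1_on_def abs_minus_commute)
  ultimately have "lipschitz1_on S d (\<lambda>z. max (h z - \<tau>) (h x - d x z))"
    by (rule lipschitz1_on_max)
  moreover have "max (h x - \<tau>) (h x - d x x) = h x"
    using \<open>0 \<le> \<tau>\<close> metric_on_self[OF assms(1,2)] by simp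
  moreover have "max (h y - \<tau>) (h x - d x y) = h x - d x y"
    by (simp add: \<tau>_def)
  moreover have "0 \<le> h z - max (h z - \<tau>) (h x - d x z) \<and> h z - max (h z - \<tau>) (h x - d x z) \<le> \<tau>"
    if "z \<in> S" for z
    using lip[OF assms(2) that] \<open>0 \<le> \<tau>\<close> by (auto simp: abs_le_iff)
  ultimately show ?thesis
    using that[of "\<lambda>z. max (h z - \<tau>) (h x - d x z)"] by (simp add: \<tau>_def)
qed

lemma pairing_nonpos_of_mass_at_ends:
  fixes k p q :: "'a \<Rightarrow> real"
  assumes "finite S" and "x \<in> S" and "y \<in> S" and "x \<noteq> y"
    and k: "\<And>z. z \<in> S \<Longrightarrow> 0 \<le> k z \<and> k z \<le> \<tau>" "k x = 0" "k y = \<tau>"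
    and p: "\<forall>z\<in>S. 0 \<le> p z" "sum p S = 1" and q: "\<forall>z\<in>S. 0 \<le> q z"
    and mass: "1 \<le> p x + q y"
  shows "(\<Sum>z\<in>S. k z * (p z - q z)) \<le> 0"
proof -
  have "(\<Sum>z\<in>S. k z * p z) = (\<Sum>z\<in>S - {x}. k z * p z)"
    using assms(1,2) k(2) by (simp add: sum.remove)
  also have "\<dots> \<le> (\<Sum>z\<in>S - {x}. \<tau> * p z)"
    using k(1) p(1) by (intro sum_mono mult_right_mono) auto
  also have "\<dots> = \<tau> * (1 - p x)"
    using assms(1,2) p(2) by (simp add: sum_distrib_left[symmetric] sum_diff1)
  finally have "(\<Sum>z\<in>S. k z * p z) \<le> \<tau> * (1 - p x)" .
  moreover have "\<tau> * q y \<le> (\<Sum>z\<in>S. k z * q z)"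
    using member_le_sum[of y S "\<lambda>z. k z * q z"] assms(1,3) k(1,3) q by auto
  moreover have "\<tau> * (1 - p x - q y) \<le> 0"
    using k(1)[OF assms(2)] mass by (simp add: mult_nonneg_nonpos)
  ultimately show ?thesis
    by (simp add: sum_subtractf algebra_simps)
qed

lemma abs_gen_le:
  assumes "lipschitz1_on S d f" and "z \<in> S" and "K z \<subseteq> S"
  shows "\<bar>gen \<mu> K f z\<bar> \<le> (\<Sum>w\<in>K z - {z}. d w z * \<bar>rate \<mu> z w\<bar>)"
proof -
  have "\<bar>gen \<mu> K f z\<bar> \<le> (\<Sum>w\<in>K z - {z}. \<bar>(f w - f z) * rate \<mu> z w\<bar>)"
    unfolding gen_def by (rule sum_abs)
  also have "\<dots> \<le> (\<Sum>w\<in>K z - {z}. d w z * \<bar>rate \<mu> z w\<bar>)"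
    using assms by (intro sum_mono) (auto simp: abs_mult lipschitz1_on_def intro!: mult_right_mono)
  finally show ?thesis .
qed

locale walk_pair =
  fixes V :: "'v set" and d :: "'v \<Rightarrow> 'v \<Rightarrow> real" and \<mu> :: "'v \<Rightarrow> real \<Rightarrow> 'v \<Rightarrow> real"
    and K :: "'v \<Rightarrow> 'v set" and x y :: 'v
  assumes metric: "metric_on V d" and walk: "local_random_walk V d \<mu> K"
    and analytic: "time_analytic V \<mu>" and x_in: "x \<in> V" and y_in: "y \<in> V" and x_ne_y: "x \<noteq> y"
begin

abbreviation Kxy :: "'v set" where
  "Kxy \<equiv> K x \<union> K y"

lemma finite_Kxy: "finite Kxy"
  using local_random_walkD(6)[OF walk x_in] local_random_walkD(6)[OF walk y_in] by simp

lemma Kxy_subset: "Kxy \<subseteq> V"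
  using local_random_walkD(7)[OF walk x_in] local_random_walkD(7)[OF walk y_in] by simp

lemma x_in_Kxy: "x \<in> Kxy" and y_in_Kxy: "y \<in> Kxy"
  using local_random_walk_center[OF walk x_in] local_random_walk_center[OF walk y_in] by simp_all

lemma metric_Kxy: "metric_on Kxy d"
  using metric_on_subset[OF metric Kxy_subset] .

lemma dist_xy_pos: "0 < d x y"
proof -
  have "0 \<le> d x y" and "d x y \<noteq> 0"
    using metric x_in y_in x_ne_y unfolding metric_on_def by blast+
  then show ?thesis
    by simp
qed

lemma supported_pmf_x: "\<epsilon> \<in> {0..1} \<Longrightarrow> supported_pmf Kxy (\<mu> x \<epsilon>)"
  and supported_pmf_y: "\<epsilon> \<in> {0..1} \<Longrightarrow> supported_pmf Kxy (\<mu> y \<epsilon>)"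
  using local_random_walk_supported_pmf[OF walk x_in _ finite_Kxy]
    local_random_walk_supported_pmf[OF walk y_in _ finite_Kxy] by simp_all

lemma gen_x: "gen \<mu> K f x = (\<Sum>w\<in>Kxy. f w * rate \<mu> x w)"
  and gen_y: "gen \<mu> K f y = (\<Sum>w\<in>Kxy. f w * rate \<mu> y w)"
  using gen_eq_sum[OF walk analytic x_in finite_Kxy _ Kxy_subset]
    gen_eq_sum[OF walk analytic y_in finite_Kxy _ Kxy_subset] by simp_all

definition quotient_error :: "real \<Rightarrow> real" where
  "quotient_error \<epsilon> = (\<Sum>w\<in>Kxy. d x w *
     \<bar>((\<mu> x \<epsilon> w - \<mu> x 0 w) / \<epsilon> - rate \<mu> x w) - ((\<mu> y \<epsilon> w - \<mu> y 0 w) / \<epsilon> - rate \<mu> y w)\<bar>)"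

lemma quotient_error_tendsto: "(quotient_error \<longlongrightarrow> 0) (at_right 0)"
proof -
  have "((\<lambda>\<epsilon>. (\<mu> z \<epsilon> w - \<mu> z 0 w) / \<epsilon>) \<longlongrightarrow> rate \<mu> z w) (at_right 0)" if "z \<in> V" "w \<in> V" for z w
    using time_analytic_has_rate[OF analytic that]
    by (simp add: has_field_derivative_iff at_within_Icc_at_right)
  then have "(quotient_error \<longlongrightarrow> (\<Sum>w\<in>Kxy. d x w * \<bar>(rate \<mu> x w - rate \<mu> x w) - (rate \<mu> y w - rate \<mu> y w)\<bar>))
      (at_right 0)"
    unfolding quotient_error_def using Kxy_subset x_in y_in by (intro tendsto_intros) auto
  then show ?thesis
    by simp
qed

lemma eventually_mass_at_centers: "eventually (\<lambda>\<epsilon>. 1 < \<mu> x \<epsilon> x + \<mu> y \<epsilon> y) (at_right 0)"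
proof -
  have "((\<lambda>\<epsilon>. \<mu> z \<epsilon> w) \<longlongrightarrow> \<mu> z 0 w) (at 0 within {0..1})" if "z \<in> V" for z w
    using local_random_walkD(5)[OF walk that, of w] by (simp add: continuous_on_def)
  then have "((\<lambda>\<epsilon>. \<mu> z \<epsilon> w) \<longlongrightarrow> \<mu> z 0 w) (at_right 0)" if "z \<in> V" for z w
    using that by (simp add: at_within_Icc_at_right)
  then have "((\<lambda>\<epsilon>. \<mu> x \<epsilon> x + \<mu> y \<epsilon> y) \<longlongrightarrow> \<mu> x 0 x + \<mu> y 0 y) (at_right 0)"
    using x_in y_in by (intro tendsto_intros)
  moreover have "\<mu> x 0 x + \<mu> y 0 y = 2"
    using local_random_walkD(4)[OF walk x_in] local_random_walkD(4)[OF walk y_in] by simp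
  ultimately show ?thesis
    by (intro order_tendstoD(1)) auto
qed

definition expansion_error :: "real \<Rightarrow> 'v \<Rightarrow> real" where
  "expansion_error \<epsilon> w =
     (\<mu> x \<epsilon> w - \<mu> x 0 w - \<epsilon> * rate \<mu> x w) - (\<mu> y \<epsilon> w - \<mu> y 0 w - \<epsilon> * rate \<mu> y w)"

lemma sum_expansion_error:
  assumes "\<epsilon> \<in> {0..1}"
  shows "(\<Sum>w\<in>Kxy. expansion_error \<epsilon> w) = 0"
proof -
  have "(0::real) \<in> {0..1}"
    by simp
  then show ?thesis
    using assms supported_pmf_x supported_pmf_y
      sum_rate_eq_0[OF walk analytic x_in finite_Kxy _ Kxy_subset]
      sum_rate_eq_0[OF walk analytic y_in finite_Kxy _ Kxy_subset]
    by (simp add: expansion_error_def sum_subtractf sum_distrib_left[symmetric] supported_pmf_def)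
qed

lemma pairing_expansion:
  assumes "\<epsilon> \<in> {0..1}"
  shows "(\<Sum>w\<in>Kxy. g w * (\<mu> x \<epsilon> w - \<mu> y \<epsilon> w))
    = (g x - g y) + \<epsilon> * (gen \<mu> K g x - gen \<mu> K g y) + (\<Sum>w\<in>Kxy. (g w - g x) * expansion_error \<epsilon> w)"
proof -
  have initial: "(\<Sum>w\<in>Kxy. g w * \<mu> z 0 w) = g z" if "z \<in> Kxy" "z \<in> V" for z
  proof -
    have "(\<Sum>w\<in>Kxy. g w * \<mu> z 0 w) = (\<Sum>w\<in>Kxy. if w = z then g z else 0)"
      using local_random_walkD(4)[OF walk that(2)] by (intro sum.cong) auto
    then show ?thesis
      using finite_Kxy that(1) by simp
  qed
  have "g w * (\<mu> x \<epsilon> w - \<mu> y \<epsilon> w) = (g w * \<mu> x 0 w - g w * \<mu> y 0 w)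
      + \<epsilon> * (g w * rate \<mu> x w - g w * rate \<mu> y w)
      + ((g w - g x) * expansion_error \<epsilon> w + g x * expansion_error \<epsilon> w)" for w
    by (simp add: expansion_error_def algebra_simps)
  then have "(\<Sum>w\<in>Kxy. g w * (\<mu> x \<epsilon> w - \<mu> y \<epsilon> w))
      = ((\<Sum>w\<in>Kxy. g w * \<mu> x 0 w) - (\<Sum>w\<in>Kxy. g w * \<mu> y 0 w))
        + \<epsilon> * ((\<Sum>w\<in>Kxy. g w * rate \<mu> x w) - (\<Sum>w\<in>Kxy. g w * rate \<mu> y w))
        + ((\<Sum>w\<in>Kxy. (g w - g x) * expansion_error \<epsilon> w) + g x * (\<Sum>w\<in>Kxy. expansion_error \<epsilon> w))"
    by (simp add: sum.distrib sum_subtractf right_diff_distrib sum_distrib_left)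
  then show ?thesis
    using initial x_in_Kxy y_in_Kxy x_in y_in sum_expansion_error[OF assms] by (simp add: gen_x gen_y)
qed

lemma first_order_expansion:
  assumes "0 < \<epsilon>" and "\<epsilon> \<le> 1" and "lipschitz1_on Kxy d g"
  shows "\<bar>(\<Sum>w\<in>Kxy. g w * (\<mu> x \<epsilon> w - \<mu> y \<epsilon> w)) - (g x - g y) - \<epsilon> * (gen \<mu> K g x - gen \<mu> K g y)\<bar>
    \<le> \<epsilon> * quotient_error \<epsilon>"
proof -
  have "\<bar>g w - g x\<bar> \<le> d x w" if "w \<in> Kxy" for w
  proof -
    have "\<bar>g w - g x\<bar> \<le> d w x"
      using assms(3) that x_in_Kxy unfolding lipschitz1_on_def by blast
    then show ?thesis
      using metric_on_sym[OF metric_Kxy that x_in_Kxy] by simp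
  qed
  then have "\<bar>\<Sum>w\<in>Kxy. (g w - g x) * expansion_error \<epsilon> w\<bar> \<le> (\<Sum>w\<in>Kxy. d x w * \<bar>expansion_error \<epsilon> w\<bar>)"
    by (intro order_trans[OF sum_abs] sum_mono) (auto simp: abs_mult intro: mult_right_mono)
  also have "\<dots> = \<epsilon> * quotient_error \<epsilon>"
  proof -
    have "expansion_error \<epsilon> w = \<epsilon> * (((\<mu> x \<epsilon> w - \<mu> x 0 w) / \<epsilon> - rate \<mu> x w)
        - ((\<mu> y \<epsilon> w - \<mu> y 0 w) / \<epsilon> - rate \<mu> y w))" for w
      using assms(1) by (simp add: expansion_error_def field_simps)
    then show ?thesis
      using assms(1) by (simp add: quotient_error_def abs_mult sum_distrib_left mult.left_commute)
  qed
  finally show ?thesis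
    using pairing_expansion[of \<epsilon> g] assms(1,2) by simp
qed

definition ric_candidates :: "real set" where
  "ric_candidates = {grad d y x (gen \<mu> K f) | f. lipschitz1_on Kxy d f \<and> grad d x y f = 1}"

lemma grad_yx: "grad d y x f = (f x - f y) / d x y"
  using metric_on_sym[OF metric x_in y_in] by (simp add: grad_def)

lemma grad_xy_eq_1_iff: "grad d x y f = 1 \<longleftrightarrow> f y - f x = d x y"
  using dist_xy_pos by (auto simp: grad_def field_simps)

lemma ric_candidates_nonempty: "ric_candidates \<noteq> {}"
proof -
  have "grad d x y (d x) = 1"
    using metric_on_self[OF metric x_in] by (simp add: grad_xy_eq_1_iff)
  then show ?thesis
    using lipschitz1_on_dist[OF metric_Kxy x_in_Kxy] by (auto simp: ric_candidates_def)
qed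

lemma bdd_below_ric_candidates: "bdd_below ric_candidates"
proof -
  define M where "M z = (\<Sum>w\<in>K z - {z}. d w z * \<bar>rate \<mu> z w\<bar>)" for z
  have "- (M x + M y) / d x y \<le> grad d y x (gen \<mu> K f)" if "lipschitz1_on Kxy d f" for f
  proof -
    have "\<bar>gen \<mu> K f x\<bar> \<le> M x" and "\<bar>gen \<mu> K f y\<bar> \<le> M y"
      using abs_gen_le[OF that x_in_Kxy] abs_gen_le[OF that y_in_Kxy] by (auto simp: M_def)
    then show ?thesis
      using dist_xy_pos by (simp add: grad_yx divide_right_mono)
  qed
  then show ?thesis
    unfolding ric_candidates_def by (intro bdd_belowI[of _ "- (M x + M y) / d x y"]) blast
qed

lemma ric_eps_upper:
  assumes "0 < \<epsilon>" and "\<epsilon> \<le> 1" and "lipschitz1_on Kxy d f" and "grad d x y f = 1"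
  shows "ollivier_ric_eps d \<mu> \<epsilon> x y / \<epsilon> \<le> grad d y x (gen \<mu> K f) + quotient_error \<epsilon> / d x y"
proof -
  have "\<epsilon> \<in> {0..1}"
    using assms(1,2) by simp
  have "lipschitz1_on Kxy d (\<lambda>z. - f z)"
    using assms(3) by (simp add: lipschitz1_on_def abs_minus_commute)
  then have "(\<Sum>u\<in>Kxy. - f u * (\<mu> x \<epsilon> u - \<mu> y \<epsilon> u)) \<le> W1 d (\<mu> x \<epsilon>) (\<mu> y \<epsilon>)"
    using lipschitz_pairing_le_W1[OF finite_Kxy supported_pmf_x supported_pmf_y] \<open>\<epsilon> \<in> {0..1}\<close> by blast
  then have "d x y - \<epsilon> * (gen \<mu> K f x - gen \<mu> K f y) - \<epsilon> * quotient_error \<epsilon> \<le> W1 d (\<mu> x \<epsilon>) (\<mu> y \<epsilon>)"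
    using first_order_expansion[OF assms(1-3)] assms(4)
    by (simp add: sum_negf grad_xy_eq_1_iff abs_le_iff)
  then have "(d x y - W1 d (\<mu> x \<epsilon>) (\<mu> y \<epsilon>)) / d x y
      \<le> (\<epsilon> * (gen \<mu> K f x - gen \<mu> K f y) + \<epsilon> * quotient_error \<epsilon>) / d x y"
    using dist_xy_pos by (intro divide_right_mono) simp_all
  also have "\<dots> = \<epsilon> * (grad d y x (gen \<mu> K f) + quotient_error \<epsilon> / d x y)"
    using dist_xy_pos by (simp add: grad_yx field_simps)
  finally have "ollivier_ric_eps d \<mu> \<epsilon> x y \<le> \<epsilon> * (grad d y x (gen \<mu> K f) + quotient_error \<epsilon> / d x y)"
    using dist_xy_pos by (simp add: ollivier_ric_eps_def diff_divide_distrib)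
  then show ?thesis
    using assms(1) by (simp add: pos_divide_le_eq mult.commute)
qed

lemma lipschitz_pairing_le_ric_bound:
  assumes "0 < \<epsilon>" and "\<epsilon> \<le> 1" and "1 \<le> \<mu> x \<epsilon> x + \<mu> y \<epsilon> y" and "lipschitz1_on Kxy d h"
  shows "(\<Sum>u\<in>Kxy. h u * (\<mu> x \<epsilon> u - \<mu> y \<epsilon> u))
    \<le> d x y - \<epsilon> * d x y * Inf ric_candidates + \<epsilon> * quotient_error \<epsilon>"
proof -
  have "\<epsilon> \<in> {0..1}"
    using assms(1,2) by simp
  obtain g where g: "lipschitz1_on Kxy d g" "g x = h x" "g y = h x - d x y"
      "\<And>z. z \<in> Kxy \<Longrightarrow> 0 \<le> h z - g z \<and> h z - g z \<le> d x y - (h x - h y)"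
    using lipschitz1_on_cone_truncation[OF metric_Kxy x_in_Kxy y_in_Kxy assms(4)] by blast
  have "lipschitz1_on Kxy d (\<lambda>z. - g z)" and "grad d x y (\<lambda>z. - g z) = 1"
    using g(1-3) by (simp_all add: lipschitz1_on_def abs_minus_commute grad_xy_eq_1_iff)
  then have "Inf ric_candidates \<le> grad d y x (gen \<mu> K (\<lambda>z. - g z))"
    unfolding ric_candidates_def by (intro cInf_lower bdd_below_ric_candidates[unfolded ric_candidates_def]) blast
  then have "\<epsilon> * d x y * Inf ric_candidates \<le> \<epsilon> * (gen \<mu> K g y - gen \<mu> K g x)"
    using assms(1) dist_xy_pos by (simp add: grad_yx gen_uminus pos_le_divide_eq mult.commute)
  then have "(\<Sum>u\<in>Kxy. g u * (\<mu> x \<epsilon> u - \<mu> y \<epsilon> u)) \<le> d x y - \<epsilon> * d x y * Inf ric_candidates + \<epsilon> * quotient_error \<epsilon>"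
    using first_order_expansion[OF assms(1,2) g(1)] g(2,3) by (simp add: abs_le_iff algebra_simps)
  moreover have "(\<Sum>u\<in>Kxy. (h u - g u) * (\<mu> x \<epsilon> u - \<mu> y \<epsilon> u)) \<le> 0"
    using supported_pmf_x[OF \<open>\<epsilon> \<in> {0..1}\<close>] supported_pmf_y[OF \<open>\<epsilon> \<in> {0..1}\<close>] g(2-4) assms(3)
    by (intro pairing_nonpos_of_mass_at_ends[OF finite_Kxy x_in_Kxy y_in_Kxy x_ne_y, of _ "d x y - (h x - h y)"])
       (auto simp: supported_pmf_def)
  moreover have "(\<Sum>u\<in>Kxy. h u * (\<mu> x \<epsilon> u - \<mu> y \<epsilon> u))
      = (\<Sum>u\<in>Kxy. g u * (\<mu> x \<epsilon> u - \<mu> y \<epsilon> u)) + (\<Sum>u\<in>Kxy. (h u - g u) * (\<mu> x \<epsilon> u - \<mu> y \<epsilon> u))"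
    unfolding sum.distrib[symmetric] by (rule sum.cong) (simp_all add: algebra_simps)
  ultimately show ?thesis
    by linarith
qed

lemma ric_eps_lower:
  assumes "0 < \<epsilon>" and "\<epsilon> \<le> 1" and "1 \<le> \<mu> x \<epsilon> x + \<mu> y \<epsilon> y"
  shows "Inf ric_candidates - quotient_error \<epsilon> / d x y \<le> ollivier_ric_eps d \<mu> \<epsilon> x y / \<epsilon>"
proof -
  have "\<epsilon> \<in> {0..1}"
    using assms(1,2) by simp
  have "W1 d (\<mu> x \<epsilon>) (\<mu> y \<epsilon>) \<le> d x y - \<epsilon> * d x y * Inf ric_candidates + \<epsilon> * quotient_error \<epsilon>"
    using lipschitz_pairing_le_ric_bound[OF assms]
    by (intro W1_le_of_lipschitz_pairing_bound[OF finite_Kxy _ metric_Kxy supported_pmf_x supported_pmf_y])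
       (use x_in_Kxy \<open>\<epsilon> \<in> {0..1}\<close> in auto)
  then have "(\<epsilon> * d x y * Inf ric_candidates - \<epsilon> * quotient_error \<epsilon>) / d x y
      \<le> (d x y - W1 d (\<mu> x \<epsilon>) (\<mu> y \<epsilon>)) / d x y"
    using dist_xy_pos by (intro divide_right_mono) simp_all
  moreover have "(\<epsilon> * d x y * Inf ric_candidates - \<epsilon> * quotient_error \<epsilon>) / d x y
      = \<epsilon> * (Inf ric_candidates - quotient_error \<epsilon> / d x y)"
    using dist_xy_pos by (simp add: field_simps)
  moreover have "(d x y - W1 d (\<mu> x \<epsilon>) (\<mu> y \<epsilon>)) / d x y = ollivier_ric_eps d \<mu> \<epsilon> x y"
    using dist_xy_pos by (simp add: ollivier_ric_eps_def diff_divide_distrib)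
  ultimately have "\<epsilon> * (Inf ric_candidates - quotient_error \<epsilon> / d x y) \<le> ollivier_ric_eps d \<mu> \<epsilon> x y"
    by simp
  then show ?thesis
    using assms(1) by (simp add: pos_le_divide_eq mult.commute)
qed

lemma ric_tendsto: "((\<lambda>\<epsilon>. ollivier_ric_eps d \<mu> \<epsilon> x y / \<epsilon>) \<longlongrightarrow> Inf ric_candidates) (at_right 0)"
proof (rule tendstoI)
  fix \<eta> :: real
  assume "0 < \<eta>"
  then obtain t where "t \<in> ric_candidates" and t: "t < Inf ric_candidates + \<eta> / 2"
    using cInf_lessD[OF ric_candidates_nonempty, of "Inf ric_candidates + \<eta> / 2"] by auto
  then obtain f where f: "lipschitz1_on Kxy d f" "grad d x y f = 1" "t = grad d y x (gen \<mu> K f)"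
    unfolding ric_candidates_def by blast
  have "eventually (\<lambda>\<epsilon>. 0 < \<epsilon> \<and> \<epsilon> \<le> 1) (at_right (0::real))"
    using eventually_at_right_real[of 0 1] by (rule eventually_mono) auto
  moreover have "((\<lambda>\<epsilon>. quotient_error \<epsilon> / d x y) \<longlongrightarrow> 0) (at_right 0)"
    using tendsto_divide[OF quotient_error_tendsto tendsto_const, of "d x y"] dist_xy_pos by simp
  then have "eventually (\<lambda>\<epsilon>. quotient_error \<epsilon> / d x y < \<eta> / 2) (at_right 0)"
    using \<open>0 < \<eta>\<close> by (intro order_tendstoD(2)) auto
  ultimately show "eventually (\<lambda>\<epsilon>. dist (ollivier_ric_eps d \<mu> \<epsilon> x y / \<epsilon>) (Inf ric_candidates) < \<eta>) (at_right 0)"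
    using eventually_mass_at_centers
  proof eventually_elim
    case (elim \<epsilon>)
    then have "ollivier_ric_eps d \<mu> \<epsilon> x y / \<epsilon> \<le> t + quotient_error \<epsilon> / d x y"
      using ric_eps_upper[OF _ _ f(1,2)] f(3) by simp
    moreover have "Inf ric_candidates - quotient_error \<epsilon> / d x y \<le> ollivier_ric_eps d \<mu> \<epsilon> x y / \<epsilon>"
      using elim by (intro ric_eps_lower) auto
    ultimately show ?case
      using elim t unfolding dist_real_def abs_less_iff by linarith
  qed
qed

end

theorem mainTheorem12:
  fixes V :: "'v set" and E :: "'v \<Rightarrow> 'v \<Rightarrow> bool" and d :: "'v \<Rightarrow> 'v \<Rightarrow> real"
    and \<mu> :: "'v \<Rightarrow> real \<Rightarrow> 'v \<Rightarrow> real" and K :: "'v \<Rightarrow> 'v set" and x y :: 'v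
  assumes "locally_finite_graph V E"
    and "metric_on V d" and "complete_metric_on V d"
    and "local_random_walk V d \<mu> K"
    and "time_analytic V \<mu>"
    and "x \<in> V" and "y \<in> V" and "x \<noteq> y"
  shows "((\<lambda>\<epsilon>. ollivier_ric_eps d \<mu> \<epsilon> x y / \<epsilon>) \<longlongrightarrow>
           Inf {grad d y x (gen \<mu> K f) | f.
                  (\<forall>u\<in>K x \<union> K y. \<forall>v\<in>K x \<union> K y. \<bar>f u - f v\<bar> \<le> d u v) \<and>
                  grad d x y f = 1}) (at_right 0)"
proof -
  interpret walk_pair V d \<mu> K x y
    using assms(2,4-8) by unfold_locales
  have "ric_candidates = {grad d y x (gen \<mu> K f) | f.
      (\<forall>u\<in>K x \<union> K y. \<forall>v\<in>K x \<union> K y. \<bar>f u - f v\<bar> \<le> d u v) \<and> grad d x y f = 1}"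
    by (simp add: ric_candidates_def lipschitz1_on_def)
  then show ?thesis
    using ric_tendsto by simp
qed

end
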